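(* Let $N,d\in\mathbb{N}^*$ and $\alpha>0$. For $i\neq j$ in $\{1,\dots,N\}$ let $\Psi_{ij}:\mathbb{R}^{2dN}\to\mathbb{R}_+$ be non-negative, bounded and locally Lipschitz, and consider the system $$\frac{dx_i}{dt}(t)=v_i(t),\qquad \frac{dv_i}{dt}(t)=\alpha\sum_{j=1}^N Q_t(i,j)\,(v_j(t)-v_i(t)),\qquad i\in\{1,\dots,N\},$$ where $x_i(t),v_i(t)\in\mathbb{R}^d$, $Q_t(i,j)=\Psi_{ij}\big((x_1(t),v_1(t)),\dots,(x_N(t),v_N(t))\big)$ for $i\neq j$ and $Q_t(i,i)=-\sum_{j\neq i}Q_t(i,j)$. Then for any initial data the solution exists and is unique on $\mathbb{R}_+$. Moreover, for every $m\in\{1,\dots,d\}$, setting $f_m(i)=v_i^m(0)$ (the $m$-th coordinate of $v_i(0)$), for every $T>0$, every $t\in[0,T]$ and every $i$, $$v_i^m(t)=p^{(T)}_{0,t}f_m(i)=\mathbb{E}\left(f_m\big(Y^{(T)}_T\big)\ \middle|\ Y^{(T)}_{T-t}=i\right),$$ where $(Y^{(T)}_t)_{t\in[0,T]}$ is a $\{1,\dots,N\}$-valued time-inhomogeneous Markov jump process with generator $(\alpha Q_{T-t})_{t\in[0,T]}$ (the $Q_t$ being evaluated along the solution), and $p^{(T)}_{s,t}=P^{(T)}_{T-t,T-s}$ with $P^{(T)}_{s,t}(i,j)=\mathbb{P}(Y^{(T)}_t=j\mid Y^{(T)}_s=i)$. Finally, with $V(t)=\sup_{i,j}\|v_i(t)-v_j(t)\|_2$,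 we have $V(t)\le V(s)$ for all $0\le s\le t$.
   Context: $\|\cdot\|_2$ is the Euclidean norm on $\mathbb{R}^d$. For a matrix $p$ and a function $f:\{1,\dots,N\}\to\mathbb{R}$, $pf(i)=\sum_j p(i,j)f(j)$. A time-inhomogeneous Markov jump process with generator $(G_t)$ jumps from $i$ to $j\ne i$ at time $t$ with rate $G_t(i,j)$. *)

theory Defs
  imports "HOL-Analysis.Analysis"
begin

text \<open>Configurations: particle indices form a finite type 'n (N = CARD('n)),
  each particle has position and velocity in real^'d (d = CARD('d)).\<close>

type_synonym ('d,'n) config = "((real^'d) \<times> (real^'d))^'n"

definition Qmat :: "('n::finite \<Rightarrow> 'n \<Rightarrow> ('d::finite,'n) config \<Rightarrow> real)
    \<Rightarrow> ('d,'n) config \<Rightarrow> 'n \<Rightarrow> 'n \<Rightarrow> real" where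
  "Qmat Psi z i j = (if i = j then - (\<Sum>k\<in>UNIV - {i}. Psi i k z) else Psi i j z)"

definition rhs :: "real \<Rightarrow> ('n::finite \<Rightarrow> 'n \<Rightarrow> ('d::finite,'n) config \<Rightarrow> real)
    \<Rightarrow> ('d,'n) config \<Rightarrow> ('d,'n) config" where
  "rhs \<alpha> Psi z = (\<chi> i. (snd (z $ i),
      \<alpha> *\<^sub>R (\<Sum>j\<in>UNIV. Qmat Psi z i j *\<^sub>R (snd (z $ j) - snd (z $ i)))))"

definition is_solution :: "real \<Rightarrow> ('n::finite \<Rightarrow> 'n \<Rightarrow> ('d::finite,'n) config \<Rightarrow> real)
    \<Rightarrow> ('d,'n) config \<Rightarrow> (real \<Rightarrow> ('d,'n) config) \<Rightarrow> bool" where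
  "is_solution \<alpha> Psi z0 z \<longleftrightarrow> z 0 = z0 \<and>
     (\<forall>t\<ge>0. (z has_vector_derivative rhs \<alpha> Psi (z t)) (at t within {0..}))"

text \<open>P is the transition function (P s u i j = Prob(Y_u = j | Y_s = i), 0 \<le> s \<le> u \<le> T)
  of the time-inhomogeneous Markov jump process on the finite state space 'n with
  (continuous) generator (G u)_{u \<in> [0,T]}: characterized by the Kolmogorov forward equation
  d/du P s u = P s u G u, P s s = Id.\<close>
definition markov_transition :: "real \<Rightarrow> (real \<Rightarrow> 'n::finite \<Rightarrow> 'n \<Rightarrow> real)
    \<Rightarrow> (real \<Rightarrow> real \<Rightarrow> 'n \<Rightarrow> 'n \<Rightarrow> real) \<Rightarrow> bool" where
  "markov_transition T G P \<longleftrightarrow>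
     (\<forall>s\<in>{0..T}. (\<forall>i j. P s s i j = (if i = j then 1 else 0)) \<and>
        (\<forall>u\<in>{s..T}. \<forall>i j. ((\<lambda>r. P s r i j) has_real_derivative
              (\<Sum>k\<in>UNIV. P s u i k * G u k j)) (at u within {s..T})))"

definition Vdiam :: "('d::finite,'n::finite) config \<Rightarrow> real" where
  "Vdiam z = (SUP i. SUP j. norm (snd (z $ i) - snd (z $ j)))"

end

(* The right-hand side of the system has linear growth, because the Q_t are bounded, and
   it is Lipschitz on bounded sets.  Picard iteration for a truncated right-hand side,
   together with a Gronwall bound showing that the truncation is never active, yields a
   unique global solution.

   Along this solution, the forward Kolmogorov equation P' = P (alpha Q_{T-u}) of the
   time-reversed process is again solved by Picard iteration; shifting the generator by a
   multiple of the identity makes it non-negative, so the iterates stay non-negative and P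
   is a non-negative matrix with rows summing to 1.  The velocities read backward in time,
   u |-> v(T - u), solve the backward Kolmogorov equation, hence u |-> P(a,u) v(T - u) is
   constant, which is the representation v(t) = P(T - t, T) v(0).  Each v_i(t) is thus a
   convex combination of the v_j(s), which cannot increase the diameter V. *)

theory Submission
  imports Defs
begin

section \<open>Lipschitz functions\<close>

lemma norm_le_sum_norm_nth: "norm (x :: 'a::real_normed_vector^'n) \<le> (\<Sum>i\<in>UNIV. norm (x $ i))"
  unfolding norm_vec_def by (rule L2_set_le_sum) simp

lemma lipschitz_on_scaleR_bounded:
  fixes f :: "'a::metric_space \<Rightarrow> real" and g :: "'a \<Rightarrow> 'b::real_normed_vector"
  assumes f: "C-lipschitz_on S f" and g: "D-lipschitz_on S g"
    and f_bound: "\<And>x. x \<in> S \<Longrightarrow> \<bar>f x\<bar> \<le> A" and g_bound: "\<And>x. x \<in> S \<Longrightarrow> norm (g x) \<le> B"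
    and nonneg: "0 \<le> A" "0 \<le> B"
  shows "(A * D + B * C)-lipschitz_on S (\<lambda>x. f x *\<^sub>R g x)"
proof (rule lipschitz_onI)
  show "0 \<le> A * D + B * C"
    using nonneg lipschitz_on_nonneg[OF f] lipschitz_on_nonneg[OF g] by simp
  fix x y assume xy: "x \<in> S" "y \<in> S"
  have "f x *\<^sub>R g x - f y *\<^sub>R g y = f x *\<^sub>R (g x - g y) + (f x - f y) *\<^sub>R g y"
    by (simp add: algebra_simps)
  then have "dist (f x *\<^sub>R g x) (f y *\<^sub>R g y) \<le> \<bar>f x\<bar> * dist (g x) (g y) + dist (f x) (f y) * norm (g y)"
    by (metis dist_norm dist_real_def norm_scaleR norm_triangle_ineq)
  also have "\<dots> \<le> A * (D * dist x y) + (C * dist x y) * B"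
    using lipschitz_onD[OF f xy] lipschitz_onD[OF g xy] f_bound[OF xy(1)] g_bound[OF xy(2)] nonneg
      lipschitz_on_nonneg[OF f]
    by (intro add_mono mult_mono) auto
  finally show "dist (f x *\<^sub>R g x) (f y *\<^sub>R g y) \<le> (A * D + B * C) * dist x y"
    by (simp add: algebra_simps)
qed

lemma lipschitz_on_sum_exists:
  assumes "finite I" and "\<And>i. i \<in> I \<Longrightarrow> \<exists>C. C-lipschitz_on S (f i)"
  shows "\<exists>C. C-lipschitz_on S (\<lambda>x. \<Sum>i\<in>I. f i x :: 'b::real_normed_vector)"
  using assms
proof (induction I rule: finite_induct)
  case empty
  show ?case using lipschitz_on_constant by auto
next
  case (insert i I)
  then obtain C D where "C-lipschitz_on S (f i)" "D-lipschitz_on S (\<lambda>x. \<Sum>i\<in>I. f i x)" by blast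
  then show ?case using insert.hyps by (auto dest: lipschitz_on_add)
qed

lemma lipschitz_on_vec_exists:
  assumes "\<And>i. \<exists>C. C-lipschitz_on S (\<lambda>x. f x $ i)"
  shows "\<exists>C. C-lipschitz_on S (f :: 'a::metric_space \<Rightarrow> 'b::real_normed_vector^'n)"
proof -
  obtain C where C: "\<And>i. (C i)-lipschitz_on S (\<lambda>x. f x $ i)" using assms by metis
  have "(\<Sum>i\<in>UNIV. C i)-lipschitz_on S f"
  proof (rule lipschitz_onI)
    fix x y assume xy: "x \<in> S" "y \<in> S"
    have "dist (f x) (f y) \<le> (\<Sum>i\<in>UNIV. dist (f x $ i) (f y $ i))"
      using norm_le_sum_norm_nth[of "f x - f y"] by (simp add: dist_norm)
    also have "\<dots> \<le> (\<Sum>i\<in>UNIV. C i * dist x y)"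
      by (intro sum_mono lipschitz_onD[OF C xy])
    finally show "dist (f x) (f y) \<le> (\<Sum>i\<in>UNIV. C i) * dist x y" by (simp add: sum_distrib_right)
  qed (use lipschitz_on_nonneg[OF C] in \<open>simp add: sum_nonneg\<close>)
  then show ?thesis ..
qed

lemma lipschitz_on_compact_if_locally_lipschitz:
  fixes f :: "'a::euclidean_space \<Rightarrow> 'b::real_normed_vector"
  assumes local: "\<And>z. \<exists>r>0. \<exists>L. L-lipschitz_on (cball z r) f" and K: "compact K"
  shows "\<exists>L. L-lipschitz_on K f"
proof -
  have "local_lipschitz {0::real} K (\<lambda>_. f)"
  proof (rule local_lipschitzI)
    fix x
    obtain r L where "r > 0" "L-lipschitz_on (cball x r) f" using local by blast
    then show "\<exists>u>0. \<exists>L. \<forall>t\<in>cball t u \<inter> {0::real}. L-lipschitz_on (cball x u \<inter> K) f" for t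
      by (meson inf_le1 lipschitz_on_subset)
  qed
  then obtain L where "\<And>t. t \<in> {0::real} \<Longrightarrow> L-lipschitz_on K f"
    by (rule local_lipschitz_compact_implies_lipschitz[OF _ K compact_sing]) auto
  then show ?thesis by blast
qed

lemma lipschitz_on_compose_closest_point:
  fixes F :: "'a::euclidean_space \<Rightarrow> 'b::real_normed_vector"
  assumes F: "L-lipschitz_on S F" and S: "closed S" "convex S" "S \<noteq> {}"
  shows "L-lipschitz_on UNIV (\<lambda>x. F (closest_point S x))"
proof (rule lipschitz_onI)
  show "0 \<le> L" by (rule lipschitz_on_nonneg[OF F])
  fix x y :: 'a
  have "dist (F (closest_point S x)) (F (closest_point S y)) \<le> L * dist (closest_point S x) (closest_point S y)"
    using S by (intro lipschitz_onD[OF F] closest_point_in_set)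
  also have "\<dots> \<le> L * dist x y"
    using S by (intro mult_left_mono[OF closest_point_lipschitz lipschitz_on_nonneg[OF F]])
  finally show "dist (F (closest_point S x)) (F (closest_point S y)) \<le> L * dist x y" .
qed

section \<open>Picard iteration\<close>

lemma has_integral_power_div_fact:
  fixes a t c :: real
  assumes "a \<le> t"
  shows "((\<lambda>s. c * (s - a) ^ n / fact n) has_integral c * (t - a) ^ Suc n / fact (Suc n)) {a..t}"
proof -
  have "((\<lambda>s. c * (s - a) ^ Suc n / fact (Suc n)) has_real_derivative c * (s - a) ^ n / fact n)
      (at s within {a..t})" for s
  proof -
    have "((\<lambda>s. (s - a) ^ Suc n) has_real_derivative real (Suc n) * (s - a) ^ n) (at s within {a..t})"
      by (auto intro!: derivative_eq_intros) (cases n; simp add: algebra_simps)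
    from DERIV_cdivide[OF DERIV_cmult[OF this, of c], of "fact (Suc n)"]
    show ?thesis by (simp add: field_simps del: of_nat_Suc)
  qed
  then show ?thesis
    using fundamental_theorem_of_calculus[OF assms, of "\<lambda>s. c * (s - a) ^ Suc n / fact (Suc n)"]
    by (simp add: has_real_derivative_iff_has_vector_derivative[symmetric])
qed

locale picard =
  fixes f :: "real \<Rightarrow> 'a::euclidean_space \<Rightarrow> 'a" and a b L :: real
  assumes le: "a \<le> b" and lipschitz_nonneg: "0 \<le> L"
    and lipschitz: "\<And>t x y. t \<in> {a..b} \<Longrightarrow> norm (f t x - f t y) \<le> L * norm (x - y)"
    and continuous: "\<And>x. continuous_on {a..b} (\<lambda>t. f t x)"
begin

lemma continuous_on_compose:
  assumes y: "continuous_on {a..b} y"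
  shows "continuous_on {a..b} (\<lambda>t. f t (y t))"
  unfolding continuous_on_def
proof
  fix t0 assume t0: "t0 \<in> {a..b}"
  have "((\<lambda>t. f t (y t) - f t (y t0)) \<longlongrightarrow> 0) (at t0 within {a..b})"
  proof (rule Lim_null_comparison)
    show "\<forall>\<^sub>F t in at t0 within {a..b}. norm (f t (y t) - f t (y t0)) \<le> L * norm (y t - y t0)"
      using lipschitz by (auto simp: eventually_at_filter)
    have "((\<lambda>t. y t - y t0) \<longlongrightarrow> 0) (at t0 within {a..b})"
      using y t0 by (simp add: continuous_on_def LIM_zero)
    then show "((\<lambda>t. L * norm (y t - y t0)) \<longlongrightarrow> 0) (at t0 within {a..b})"
      using tendsto_mult_right_zero tendsto_norm_zero by blast
  qed
  moreover have "((\<lambda>t. f t (y t0)) \<longlongrightarrow> f t0 (y t0)) (at t0 within {a..b})"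
    using continuous t0 by (simp add: continuous_on_def)
  ultimately have "((\<lambda>t. (f t (y t) - f t (y t0)) + f t (y t0)) \<longlongrightarrow> 0 + f t0 (y t0)) (at t0 within {a..b})"
    by (rule tendsto_add)
  then show "((\<lambda>t. f t (y t)) \<longlongrightarrow> f t0 (y t0)) (at t0 within {a..b})" by simp
qed

lemma integral_compose_has_vector_derivative:
  assumes "continuous_on {a..b} y" "t \<in> {a..b}"
  shows "((\<lambda>t. integral {a..t} (\<lambda>s. f s (y s))) has_vector_derivative f t (y t)) (at t within {a..b})"
  using integral_has_vector_derivative[OF continuous_on_compose[OF assms(1)] assms(2)] .

primrec iterate :: "'a \<Rightarrow> nat \<Rightarrow> real \<Rightarrow> 'a" where
  "iterate x0 0 = (\<lambda>t. x0)"
| "iterate x0 (Suc n) = (\<lambda>t. x0 + integral {a..t} (\<lambda>s. f s (iterate x0 n s)))"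

lemma continuous_on_iterate: "continuous_on {a..b} (iterate x0 n)"
proof (induction n)
  case (Suc n)
  have "continuous_on {a..b} (\<lambda>t. integral {a..t} (\<lambda>s. f s (iterate x0 n s)))"
    unfolding continuous_on_eq_continuous_within
    using integral_compose_has_vector_derivative[OF Suc] has_vector_derivative_continuous by blast
  then show ?case by (auto intro!: continuous_intros)
qed simp

lemma integrable_on_iterate:
  "t \<in> {a..b} \<Longrightarrow> (\<lambda>s. f s (iterate x0 n s)) integrable_on {a..t}"
  by (rule integrable_continuous_real, rule continuous_on_subset[OF continuous_on_compose])
    (auto intro: continuous_on_iterate)

lemma iterate_Suc_diff:
  "t \<in> {a..b} \<Longrightarrow> iterate x0 (Suc m) t - iterate x0 (Suc n) t
    = integral {a..t} (\<lambda>s. f s (iterate x0 m s) - f s (iterate x0 n s))"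
  by (simp add: integral_diff integrable_on_iterate)

lemma iterate_dist_le:
  assumes M: "\<And>s. s \<in> {a..b} \<Longrightarrow> norm (f s x0) \<le> M" and t: "t \<in> {a..b}"
  shows "norm (iterate x0 (Suc n) t - iterate x0 n t) \<le> M * L ^ n * (t - a) ^ Suc n / fact (Suc n)"
  using t
proof (induction n arbitrary: t)
  have has_integral: "((\<lambda>s. M * L ^ n * (s - a) ^ n / fact n) has_integral
      M * L ^ n * (t - a) ^ Suc n / fact (Suc n)) {a..t}" if "a \<le> t" for n t
    using has_integral_power_div_fact[OF that, of "M * L ^ n" n] by (simp add: mult.assoc)
  {
    case 0
    have "norm (integral {a..t} (\<lambda>s. f s x0)) \<le> integral {a..t} (\<lambda>s. M * L ^ 0 * (s - a) ^ 0 / fact 0)"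
      using 0 integrable_on_iterate[of t x0 0] has_integral[of t 0] M
      by (intro integral_norm_bound_integral) auto
    then show ?case using 0 has_integral[of t 0] by (simp add: integral_unique mult.commute)
  next
    case (Suc n)
    have "norm (iterate x0 (Suc (Suc n)) t - iterate x0 (Suc n) t)
        = norm (integral {a..t} (\<lambda>s. f s (iterate x0 (Suc n) s) - f s (iterate x0 n s)))"
      using Suc.prems by (simp only: iterate_Suc_diff)
    also have "\<dots> \<le> integral {a..t} (\<lambda>s. M * L ^ Suc n * (s - a) ^ Suc n / fact (Suc n))"
    proof (rule integral_norm_bound_integral)
      fix s assume s: "s \<in> {a..t}"
      then have "norm (f s (iterate x0 (Suc n) s) - f s (iterate x0 n s))
          \<le> L * norm (iterate x0 (Suc n) s - iterate x0 n s)"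
        using Suc.prems lipschitz by auto
      also have "\<dots> \<le> L * (M * L ^ n * (s - a) ^ Suc n / fact (Suc n))"
        using Suc.IH[of s] Suc.prems s lipschitz_nonneg by (intro mult_left_mono) auto
      finally show "norm (f s (iterate x0 (Suc n) s) - f s (iterate x0 n s))
          \<le> M * L ^ Suc n * (s - a) ^ Suc n / fact (Suc n)" by (simp add: field_simps)
    qed (use Suc.prems has_integral_integrable[OF has_integral[of t "Suc n"]] in
        \<open>auto intro!: integrable_diff integrable_on_iterate simp del: iterate.simps\<close>)
    also have "\<dots> = M * L ^ Suc n * (t - a) ^ Suc (Suc n) / fact (Suc (Suc n))"
      using Suc.prems by (intro integral_unique has_integral) auto
    finally show ?case .
  }
qed

lemma uniform_limit_iterate:
  obtains X where "uniform_limit {a..b} (iterate x0) X sequentially"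
proof -
  have "bounded ((\<lambda>s. f s x0) ` {a..b})"
    by (intro compact_imp_bounded compact_continuous_image continuous compact_Icc)
  then obtain M where M: "\<And>s. s \<in> {a..b} \<Longrightarrow> norm (f s x0) \<le> M"
    unfolding bounded_iff by (meson imageI)
  have M_nonneg: "0 \<le> M" using M[of a] le by (auto intro: order_trans[OF norm_ge_zero])
  define H where "H n = M * (b - a) * ((L * (b - a)) ^ n / fact n)" for n
  have "summable H"
    unfolding H_def using summable_mult[OF summable_exp_generic[of "L * (b - a)"], of "M * (b - a)"]
    by (simp add: divide_inverse mult.commute)
  moreover have "norm (iterate x0 (Suc n) t - iterate x0 n t) \<le> H n" if t: "t \<in> {a..b}" for n t
  proof -
    have "norm (iterate x0 (Suc n) t - iterate x0 n t) \<le> M * L ^ n * (t - a) ^ Suc n / fact (Suc n)"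
      by (rule iterate_dist_le[OF M t])
    also have "\<dots> \<le> M * L ^ n * (b - a) ^ Suc n / fact n"
      using t M_nonneg lipschitz_nonneg
      by (intro frac_le mult_left_mono power_mono fact_mono) auto
    also have "\<dots> = H n" by (simp add: H_def power_mult_distrib)
    finally show ?thesis .
  qed
  ultimately have "uniform_limit {a..b} (\<lambda>n t. \<Sum>k<n. iterate x0 (Suc k) t - iterate x0 k t)
      (\<lambda>t. \<Sum>k. iterate x0 (Suc k) t - iterate x0 k t) sequentially"
    by (intro Weierstrass_m_test) auto
  moreover have "(\<Sum>k<n. iterate x0 (Suc k) t - iterate x0 k t) = iterate x0 n t - x0" for n t
    using sum_lessThan_telescope[of "\<lambda>k. iterate x0 k t" n] by (simp del: iterate.simps(2))
  ultimately have "uniform_limit {a..b} (iterate x0)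
      (\<lambda>t. x0 + (\<Sum>k. iterate x0 (Suc k) t - iterate x0 k t)) sequentially"
    by (simp add: uniform_limit_iff dist_norm algebra_simps del: iterate.simps(2))
  then show ?thesis ..
qed

lemma uniform_limit_compose:
  assumes X: "uniform_limit {a..b} Y X F" and S: "S \<subseteq> {a..b}"
  shows "uniform_limit S (\<lambda>n s. f s (Y n s)) (\<lambda>s. f s (X s)) F"
proof (rule uniform_limitI)
  fix e :: real assume "0 < e"
  then have "\<forall>\<^sub>F n in F. \<forall>s\<in>{a..b}. dist (Y n s) (X s) < e / (L + 1)"
    using X lipschitz_nonneg by (simp add: uniform_limit_iff)
  then show "\<forall>\<^sub>F n in F. \<forall>s\<in>S. dist (f s (Y n s)) (f s (X s)) < e"
  proof eventually_elim
    case (elim n)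
    show ?case
    proof
      fix s assume s: "s \<in> S"
      have "dist (f s (Y n s)) (f s (X s)) \<le> L * dist (Y n s) (X s)"
        using lipschitz s S by (auto simp: dist_norm)
      also have "\<dots> \<le> L * (e / (L + 1))"
        using elim s S lipschitz_nonneg by (intro mult_left_mono) (auto intro: less_imp_le)
      also have "\<dots> < e" using \<open>0 < e\<close> lipschitz_nonneg by (simp add: field_simps)
      finally show "dist (f s (Y n s)) (f s (X s)) < e" .
    qed
  qed
qed

lemma uniform_limit_iterate_fixed_point:
  assumes X: "uniform_limit {a..b} (iterate x0) X sequentially" and t: "t \<in> {a..b}"
  shows "X t = x0 + integral {a..t} (\<lambda>s. f s (X s))"
proof -
  have sub: "{a..t} \<subseteq> {a..b}" using t by auto
  have "uniform_limit {a..t} (\<lambda>n s. f s (iterate x0 n s)) (\<lambda>s. f s (X s)) sequentially"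
    by (rule uniform_limit_compose[OF X sub])
  then obtain I J where I: "\<And>n. ((\<lambda>s. f s (iterate x0 n s)) has_integral I n) {a..t}"
    and J: "((\<lambda>s. f s (X s)) has_integral J) {a..t}" and lim: "I \<longlonglongrightarrow> J"
    by (rule uniform_limit_integral)
      (auto intro: continuous_on_subset[OF continuous_on_compose[OF continuous_on_iterate] sub])
  have "(\<lambda>n. iterate x0 (Suc n) t) \<longlonglongrightarrow> X t"
    using tendsto_uniform_limitI[OF X t] by (rule LIMSEQ_Suc)
  moreover have "(\<lambda>n. iterate x0 (Suc n) t) = (\<lambda>n. x0 + I n)"
    using I by (auto simp: integral_unique)
  moreover have "(\<lambda>n. x0 + I n) \<longlonglongrightarrow> x0 + J" using lim by (intro tendsto_intros)
  ultimately have "X t = x0 + J" by (metis LIMSEQ_unique)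
  then show ?thesis using J by (simp add: integral_unique)
qed

theorem solution_exists:
  assumes C: "closed C" "x0 \<in> C"
    and invariant: "\<And>y t. continuous_on {a..b} y \<Longrightarrow> (\<forall>s\<in>{a..b}. y s \<in> C) \<Longrightarrow> t \<in> {a..b} \<Longrightarrow>
        x0 + integral {a..t} (\<lambda>s. f s (y s)) \<in> C"
  obtains x where "x a = x0"
    "\<And>t. t \<in> {a..b} \<Longrightarrow> (x has_vector_derivative f t (x t)) (at t within {a..b})"
    "\<And>t. t \<in> {a..b} \<Longrightarrow> x t \<in> C"
proof -
  obtain X where X: "uniform_limit {a..b} (iterate x0) X sequentially"
    by (rule uniform_limit_iterate)
  have iterate_in: "\<forall>t\<in>{a..b}. iterate x0 n t \<in> C" for n
    by (induction n) (use C invariant continuous_on_iterate in auto)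
  have X_cont: "continuous_on {a..b} X"
    by (rule uniform_limit_theorem[OF _ X]) (simp_all add: continuous_on_iterate)
  have fixed: "\<And>t. t \<in> {a..b} \<Longrightarrow> X t = x0 + integral {a..t} (\<lambda>s. f s (X s))"
    by (rule uniform_limit_iterate_fixed_point[OF X])
  show ?thesis
  proof
    show "X a = x0" using fixed[of a] le by simp
  next
    fix t assume t: "t \<in> {a..b}"
    show "(X has_vector_derivative f t (X t)) (at t within {a..b})"
      using integral_compose_has_vector_derivative[OF X_cont t]
      by (intro has_vector_derivative_transform[OF t fixed]) (auto intro: derivative_eq_intros)
    show "X t \<in> C"
      using iterate_in t C(1) by (intro Lim_in_closed_set[OF _ _ _ tendsto_uniform_limitI[OF X t]]) auto
  qed
qed

end

section \<open>Autonomous equations with linear growth\<close>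

lemma gronwall_norm_squared:
  fixes y :: "real \<Rightarrow> 'a::real_inner"
  assumes ab: "a \<le> b"
    and deriv: "\<And>t. t \<in> {a..b} \<Longrightarrow> (y has_vector_derivative y' t) (at t within {a..b})"
    and le: "\<And>t. t \<in> {a..b} \<Longrightarrow> y t \<bullet> y' t \<le> K * (norm (y t))\<^sup>2"
  shows "(norm (y b))\<^sup>2 \<le> exp (2 * K * (b - a)) * (norm (y a))\<^sup>2"
proof -
  define \<phi> where "\<phi> t = exp (- (2 * K * (t - a))) * (y t \<bullet> y t)" for t
  have "\<phi> b \<le> \<phi> a"
  proof (rule DERIV_nonpos_imp_decreasing_open[OF ab])
    have "continuous_on {a..b} y"
      using deriv has_vector_derivative_continuous continuous_on_eq_continuous_within by blast
    then show "continuous_on {a..b} \<phi>" unfolding \<phi>_def by (intro continuous_intros)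
    fix t assume t: "a < t" "t < b"
    then have "at t within {a..b} = at t" by (intro at_within_interior) auto
    then have dy: "(y has_derivative (\<lambda>h. h *\<^sub>R y' t)) (at t)"
      using deriv[of t] t by (simp add: has_vector_derivative_def)
    have "((\<lambda>t. y t \<bullet> y t) has_real_derivative 2 * (y t \<bullet> y' t)) (at t)"
      unfolding has_field_derivative_def
      by (rule has_derivative_eq_rhs[OF has_derivative_inner[OF dy dy]])
        (simp add: fun_eq_iff inner_commute[of "y' t"])
    then have "(\<phi> has_real_derivative
        exp (- (2 * K * (t - a))) * (2 * (y t \<bullet> y' t) - 2 * K * (y t \<bullet> y t))) (at t)"
      unfolding \<phi>_def by (auto intro!: derivative_eq_intros simp: algebra_simps)
    moreover have "y t \<bullet> y' t \<le> K * (y t \<bullet> y t)"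
      using le[of t] t by (simp add: power2_norm_eq_inner)
    ultimately show "\<exists>D. (\<phi> has_real_derivative D) (at t) \<and> D \<le> 0"
      by (intro exI[of _ "exp (- (2 * K * (t - a))) * (2 * (y t \<bullet> y' t) - 2 * K * (y t \<bullet> y t))"])
        (simp add: mult_nonneg_nonpos)
  qed
  then have "(norm (y b))\<^sup>2 / exp (2 * K * (b - a)) \<le> (norm (y a))\<^sup>2"
    by (simp add: \<phi>_def power2_norm_eq_inner exp_minus divide_inverse mult.commute)
  then show ?thesis by (simp add: divide_le_eq mult.commute)
qed

lemma ode_solution_norm_le_exp:
  fixes x :: "real \<Rightarrow> 'a::real_inner"
  assumes ab: "a \<le> b"
    and deriv: "\<And>t. t \<in> {a..b} \<Longrightarrow> (x has_vector_derivative F (x t)) (at t within {a..b})"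
    and growth: "\<And>y. norm (F y) \<le> K * norm y"
  shows "norm (x b) \<le> exp (K * (b - a)) * norm (x a)"
proof -
  have "x t \<bullet> F (x t) \<le> K * (norm (x t))\<^sup>2" for t
  proof -
    have "x t \<bullet> F (x t) \<le> norm (x t) * norm (F (x t))" by (rule norm_cauchy_schwarz)
    also have "\<dots> \<le> norm (x t) * (K * norm (x t))" by (rule mult_left_mono[OF growth norm_ge_zero])
    finally show ?thesis by (simp add: power2_eq_square algebra_simps)
  qed
  then have "(norm (x b))\<^sup>2 \<le> exp (2 * K * (b - a)) * (norm (x a))\<^sup>2"
    using gronwall_norm_squared[OF ab deriv] by blast
  also have "\<dots> = (exp (K * (b - a)) * norm (x a))\<^sup>2"
    by (simp add: power_mult_distrib exp_double[symmetric] algebra_simps)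
  finally show ?thesis by (rule power2_le_imp_le) simp
qed

lemma lipschitz_ode_solutions_eq:
  fixes F :: "'a::real_inner \<Rightarrow> 'a"
  assumes ab: "a \<le> b"
    and z: "\<And>t. t \<in> {a..b} \<Longrightarrow> (z has_vector_derivative F (z t)) (at t within {a..b})"
    and w: "\<And>t. t \<in> {a..b} \<Longrightarrow> (w has_vector_derivative F (w t)) (at t within {a..b})"
    and init: "z a = w a"
    and in_S: "\<And>t. t \<in> {a..b} \<Longrightarrow> z t \<in> S" "\<And>t. t \<in> {a..b} \<Longrightarrow> w t \<in> S"
    and lipschitz: "L-lipschitz_on S F"
  shows "z b = w b"
proof -
  have "(norm (z b - w b))\<^sup>2 \<le> exp (2 * L * (b - a)) * (norm (z a - w a))\<^sup>2"
  proof (rule gronwall_norm_squared[OF ab])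
    fix t assume t: "t \<in> {a..b}"
    show "((\<lambda>t. z t - w t) has_vector_derivative F (z t) - F (w t)) (at t within {a..b})"
      using z[OF t] w[OF t] by (rule has_vector_derivative_diff)
    have "norm (F (z t) - F (w t)) \<le> L * norm (z t - w t)"
      using lipschitz_onD[OF lipschitz in_S[OF t]] by (simp add: dist_norm)
    then show "(z t - w t) \<bullet> (F (z t) - F (w t)) \<le> L * (norm (z t - w t))\<^sup>2"
      using norm_cauchy_schwarz[of "z t - w t" "F (z t) - F (w t)"]
        mult_left_mono[of _ _ "norm (z t - w t)"]
      by (fastforce simp: power2_eq_square algebra_simps)
  qed
  then show ?thesis using init by simp
qed

lemma ode_solution_exists_on_interval:
  fixes F :: "'a::euclidean_space \<Rightarrow> 'a"
  assumes growth: "\<And>x. norm (F x) \<le> K * norm x"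
    and lipschitz: "\<And>R. \<exists>L. L-lipschitz_on (cball 0 R) F"
    and b: "0 \<le> b"
  obtains x where "x 0 = x0"
    "\<And>t. t \<in> {0..b} \<Longrightarrow> (x has_vector_derivative F (x t)) (at t within {0..b})"
proof -
  define K' where "K' = max K 0"
  have K': "0 \<le> K'" "\<And>x. norm (F x) \<le> K' * norm x"
    unfolding K'_def using growth order_trans[OF growth mult_right_mono[OF max.cobounded1 norm_ge_zero]]
    by auto
  define R where "R = exp (K' * b) * norm x0 + 1"
  have R: "0 < R" unfolding R_def by (simp add: add_nonneg_pos)
  obtain L where L: "L-lipschitz_on (cball 0 R) F" using lipschitz by blast
  txt \<open>Truncate \<open>F\<close> outside the ball of radius \<open>R\<close>; the a-priori bound below shows
    that the truncation is never active.\<close>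
  define \<rho> where "\<rho> = closest_point (cball (0::'a) R)"
  have \<rho>_self: "x \<in> cball 0 R \<Longrightarrow> \<rho> x = x" for x
    unfolding \<rho>_def by (rule closest_point_self)
  have \<rho>_norm: "norm (\<rho> x) \<le> norm x" for x
    using closest_point_lipschitz[of "cball (0::'a) R" x 0] \<rho>_self[of 0] R by (simp add: \<rho>_def)
  have truncated_lipschitz: "norm (F (\<rho> x) - F (\<rho> y)) \<le> L * norm (x - y)" for x y
    using lipschitz_onD[OF lipschitz_on_compose_closest_point[OF L] UNIV_I UNIV_I] R
    by (simp add: \<rho>_def dist_norm)
  interpret truncated: picard "\<lambda>_. F \<circ> \<rho>" 0 b L
    using b lipschitz_on_nonneg[OF L] truncated_lipschitz by unfold_locales auto
  obtain x where x0: "x 0 = x0"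
    and x: "\<And>t. t \<in> {0..b} \<Longrightarrow> (x has_vector_derivative (F \<circ> \<rho>) (x t)) (at t within {0..b})"
    by (rule truncated.solution_exists[OF closed_UNIV UNIV_I]) auto
  have bound: "norm (x t) < R" if t: "t \<in> {0..b}" for t
  proof -
    have "norm (x t) \<le> exp (K' * (t - 0)) * norm (x 0)"
    proof (rule ode_solution_norm_le_exp)
      fix s assume "s \<in> {0..t}"
      then show "(x has_vector_derivative (F \<circ> \<rho>) (x s)) (at s within {0..t})"
        using t by (intro has_vector_derivative_within_subset[OF x]) auto
    next
      fix y show "norm ((F \<circ> \<rho>) y) \<le> K' * norm y"
        using order_trans[OF K'(2) mult_left_mono[OF \<rho>_norm K'(1)]] by simp
    qed (use t in auto)
    also have "\<dots> \<le> exp (K' * b) * norm x0"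
      using t K' x0 by (auto intro!: mult_right_mono mult_left_mono)
    finally show ?thesis unfolding R_def by simp
  qed
  have "(F \<circ> \<rho>) (x t) = F (x t)" if "t \<in> {0..b}" for t
    using \<rho>_self[of "x t"] bound[OF that] by simp
  with x show ?thesis by (intro that[of x, OF x0]) auto
qed

lemma ode_solutions_eq_on_interval:
  fixes F :: "'a::euclidean_space \<Rightarrow> 'a"
  assumes lipschitz: "\<And>R. \<exists>L. L-lipschitz_on (cball 0 R) F"
    and z: "\<And>t. t \<in> {a..b} \<Longrightarrow> (z has_vector_derivative F (z t)) (at t within {a..b})"
    and w: "\<And>t. t \<in> {a..b} \<Longrightarrow> (w has_vector_derivative F (w t)) (at t within {a..b})"
    and init: "z a = w a" and t: "t \<in> {a..b}"
  shows "z t = w t"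
proof -
  have "continuous_on {a..b} z" "continuous_on {a..b} w"
    using z w has_vector_derivative_continuous continuous_on_eq_continuous_within by blast+
  then have "bounded (z ` {a..b} \<union> w ` {a..b})"
    by (intro bounded_Un[THEN iffD2] conjI compact_imp_bounded compact_continuous_image compact_Icc)
  then obtain R where R: "\<And>s. s \<in> {a..b} \<Longrightarrow> z s \<in> cball 0 R \<and> w s \<in> cball 0 R"
    unfolding bounded_iff by (meson UnCI imageI mem_cball_0)
  obtain L where L: "L-lipschitz_on (cball 0 R) F" using lipschitz by blast
  show ?thesis
  proof (rule lipschitz_ode_solutions_eq[where a=a and b=t and S="cball 0 R" and z=z and w=w, OF _ _ _ init _ _ L])
    fix s assume s: "s \<in> {a..t}"
    then show "(z has_vector_derivative F (z s)) (at s within {a..t})"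
      "(w has_vector_derivative F (w s)) (at s within {a..t})"
      using t by (auto intro!: has_vector_derivative_within_subset[OF z] has_vector_derivative_within_subset[OF w])
    show "z s \<in> cball 0 R" "w s \<in> cball 0 R" using R s t by auto
  qed (use t in auto)
qed

lemma ode_global_solution_exists:
  fixes F :: "'a::euclidean_space \<Rightarrow> 'a"
  assumes growth: "\<And>x. norm (F x) \<le> K * norm x"
    and lipschitz: "\<And>R. \<exists>L. L-lipschitz_on (cball 0 R) F"
  obtains z where "z 0 = x0"
    "\<And>t. 0 \<le> t \<Longrightarrow> (z has_vector_derivative F (z t)) (at t within {0..})"
proof -
  have "\<exists>x. x 0 = x0 \<and> (\<forall>t\<in>{0..real n}. (x has_vector_derivative F (x t)) (at t within {0..real n}))" for n
    by (rule ode_solution_exists_on_interval[OF growth lipschitz, of "real n" x0]) auto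
  then obtain x where x0: "\<And>n. x n 0 = x0"
    and x: "\<And>n t. t \<in> {0..real n} \<Longrightarrow> (x n has_vector_derivative F (x n t)) (at t within {0..real n})"
    by metis
  have agree: "x n t = x m t" if t: "t \<in> {0..real n}" and nm: "real n \<le> real m" for n m t
  proof (rule ode_solutions_eq_on_interval[where z="x n" and w="x m", OF lipschitz])
    fix s assume s: "s \<in> {0..real n}"
    show "(x n has_vector_derivative F (x n s)) (at s within {0..real n})" by (rule x[OF s])
    show "(x m has_vector_derivative F (x m s)) (at s within {0..real n})"
      using s nm by (intro has_vector_derivative_within_subset[OF x]) auto
  qed (use t x0 in auto)
  define z where "z t = x (nat \<lceil>t\<rceil> + 1) t" for t
  have z_eq: "z s = x n s" if s: "s \<in> {0..real n}" for n s
  proof -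
    define m where "m = nat \<lceil>s\<rceil> + 1"
    have "s \<in> {0..real m}" using s unfolding m_def by auto linarith
    then show ?thesis
      using s agree[of s n m] agree[of s m n] unfolding z_def m_def[symmetric] by force
  qed
  show ?thesis
  proof
    show "z 0 = x0" using z_eq[of 0 0] x0 by simp
  next
    fix t :: real assume t: "0 \<le> t"
    define n where "n = nat \<lceil>t\<rceil> + 1"
    have tn: "t < real n" unfolding n_def by linarith
    have "at t within {0..real n} = at t within {0..}"
      by (rule at_within_nhd[of t "{..<real n}"]) (use tn in auto)
    then have "(x n has_vector_derivative F (z t)) (at t within {0..})"
      using x[of t n] z_eq[of t n] t tn by simp
    then show "(z has_vector_derivative F (z t)) (at t within {0..})"
    proof (rule has_vector_derivative_transform_within)
      show "0 < real n - t" using tn by simp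
      fix s assume "s \<in> {0..}" "dist s t < real n - t"
      then show "x n s = z s" by (intro z_eq[symmetric]) (auto simp: dist_real_def)
    qed (use t in auto)
  qed
qed

lemma ode_global_solution_unique:
  fixes F :: "'a::euclidean_space \<Rightarrow> 'a"
  assumes lipschitz: "\<And>R. \<exists>L. L-lipschitz_on (cball 0 R) F"
    and z: "\<And>t. 0 \<le> t \<Longrightarrow> (z has_vector_derivative F (z t)) (at t within {0..})"
    and w: "\<And>t. 0 \<le> t \<Longrightarrow> (w has_vector_derivative F (w t)) (at t within {0..})"
    and init: "z 0 = w 0" and t: "0 \<le> t"
  shows "z t = w t"
  by (rule ode_solutions_eq_on_interval[where a=0 and b=t, OF lipschitz])
    (use t init in \<open>auto intro!: has_vector_derivative_within_subset[OF z]
      has_vector_derivative_within_subset[OF w]\<close>)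

section \<open>Transition functions of Markov jump processes\<close>

lemma abs_matrix_entry_le_norm: "\<bar>X $ i $ j\<bar> \<le> norm (X :: real^'m^'n)"
  by (rule order_trans[OF component_le_norm_cart Finite_Cartesian_Product.norm_nth_le])

lemma norm_matrix_mult_le:
  fixes X :: "real^'m^'n" and A :: "real^'p^'m"
  assumes A: "\<And>k j. \<bar>A $ k $ j\<bar> \<le> B"
  shows "norm (X ** A) \<le> real CARD('n) * real CARD('p) * real CARD('m) * B * norm X"
proof -
  have entry: "\<bar>(X ** A) $ i $ j\<bar> \<le> real CARD('m) * B * norm X" for i j
  proof -
    have "\<bar>(X ** A) $ i $ j\<bar> \<le> (\<Sum>k\<in>UNIV. \<bar>X $ i $ k * A $ k $ j\<bar>)"
      unfolding matrix_matrix_mult_def by (simp add: sum_abs)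
    also have "\<dots> \<le> (\<Sum>k\<in>(UNIV::'m set). norm X * B)"
      by (intro sum_mono) (simp add: abs_mult mult_mono abs_matrix_entry_le_norm A)
    finally show ?thesis by (simp add: algebra_simps)
  qed
  have "norm (X ** A) \<le> (\<Sum>i\<in>UNIV. \<Sum>j\<in>UNIV. \<bar>(X ** A) $ i $ j\<bar>)"
    by (rule order_trans[OF norm_le_sum_norm_nth sum_mono[OF norm_le_l1_cart]])
  also have "\<dots> \<le> (\<Sum>i\<in>(UNIV::'n set). \<Sum>j\<in>(UNIV::'p set). real CARD('m) * B * norm X)"
    by (intro sum_mono entry)
  finally show ?thesis by (simp add: algebra_simps)
qed

lemma integral_matrix_mult_nonneg:
  fixes Y :: "real \<Rightarrow> real^'m^'n" and A :: "real \<Rightarrow> real^'p^'m"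
  assumes int: "(\<lambda>r. Y r ** A r) integrable_on S"
    and Y: "\<And>r i k. r \<in> S \<Longrightarrow> 0 \<le> Y r $ i $ k" and A: "\<And>r k j. r \<in> S \<Longrightarrow> 0 \<le> A r $ k $ j"
  shows "0 \<le> integral S (\<lambda>r. Y r ** A r) $ i $ j"
proof -
  have entry: "bounded_linear (\<lambda>X :: real^'p^'n. X $ i $ j)"
    by (rule bounded_linear_compose[OF bounded_linear_vec_nth bounded_linear_vec_nth])
  have "0 \<le> integral S (\<lambda>r. (Y r ** A r) $ i $ j)"
    using Y A by (intro integral_nonneg integrable_linear[OF int entry, unfolded o_def])
      (auto simp: matrix_matrix_mult_def intro!: sum_nonneg)
  also have "\<dots> = integral S (\<lambda>r. Y r ** A r) $ i $ j"
    using integral_linear[OF int entry] by (simp add: o_def)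
  finally show ?thesis .
qed

lemma nonneg_matrix_ode_solution:
  fixes A :: "real \<Rightarrow> real^'n^'n"
  assumes sT: "s \<le> T" and cont: "continuous_on {s..T} A"
    and nonneg: "\<And>t i j. t \<in> {s..T} \<Longrightarrow> 0 \<le> A t $ i $ j"
  obtains M where "M s = mat 1"
    "\<And>t. t \<in> {s..T} \<Longrightarrow> (M has_vector_derivative M t ** A t) (at t within {s..T})"
    "\<And>t i j. t \<in> {s..T} \<Longrightarrow> 0 \<le> M t $ i $ j"
proof -
  have "bounded (A ` {s..T})"
    by (intro compact_imp_bounded compact_continuous_image cont compact_Icc)
  then obtain B where B: "\<And>t. t \<in> {s..T} \<Longrightarrow> norm (A t) \<le> B"
    unfolding bounded_iff by (meson imageI)
  have B_nonneg: "0 \<le> B" using order_trans[OF norm_ge_zero B[of s]] sT by simp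
  have entry_le: "\<bar>A t $ k $ j\<bar> \<le> B" if "t \<in> {s..T}" for t k j
    using abs_matrix_entry_le_norm B[OF that] by (rule order_trans)
  have lipschitz: "norm (X ** A t - Y ** A t) \<le> real CARD('n) ^ 3 * B * norm (X - Y)"
    if "t \<in> {s..T}" for t and X Y :: "real^'n^'n"
  proof -
    have "X ** A t - Y ** A t = (X - Y) ** A t"
      by (simp add: matrix_matrix_mult_def vec_eq_iff sum_subtractf left_diff_distrib)
    then show ?thesis
      using norm_matrix_mult_le[OF entry_le[OF that], of "X - Y"] by (simp add: power3_eq_cube)
  qed
  have continuous: "continuous_on {s..T} (\<lambda>t. X ** A t)" for X :: "real^'n^'n"
    unfolding matrix_matrix_mult_def by (intro continuous_intros cont)
  interpret picard "\<lambda>t (X :: real^'n^'n). X ** A t" s T "real CARD('n) ^ 3 * B"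
    using sT B_nonneg lipschitz continuous by unfold_locales auto
  let ?C = "{M :: real^'n^'n. \<forall>i j. 0 \<le> M $ i $ j}"
  have closed: "closed ?C"
    by (intro closed_Collect_all closed_Collect_le continuous_intros)
  have identity: "mat 1 \<in> ?C" by (simp add: mat_def)
  have invariant: "mat 1 + integral {s..t} (\<lambda>r. Y r ** A r) \<in> ?C"
    if Y: "continuous_on {s..T} Y" "\<forall>r\<in>{s..T}. Y r \<in> ?C" and t: "t \<in> {s..T}" for Y t
  proof -
    have int: "(\<lambda>r. Y r ** A r) integrable_on {s..t}"
      using t by (intro integrable_continuous_real continuous_on_subset[OF continuous_on_compose[OF Y(1)]]) auto
    have "0 \<le> integral {s..t} (\<lambda>r. Y r ** A r) $ i $ j" for i j
      using Y(2) t nonneg by (intro integral_matrix_mult_nonneg[OF int]) auto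
    then show ?thesis by (simp add: mat_def)
  qed
  show ?thesis
    by (rule solution_exists[OF closed identity invariant]) (use that in auto)
qed

lemma markov_transition_shifted_generator:
  fixes G :: "real \<Rightarrow> 'n::finite \<Rightarrow> 'n \<Rightarrow> real" and M :: "real \<Rightarrow> real \<Rightarrow> real^'n^'n"
  assumes M1: "\<And>s. s \<in> {0..T} \<Longrightarrow> M s s = mat 1"
    and M_deriv: "\<And>s t. s \<in> {0..T} \<Longrightarrow> t \<in> {s..T} \<Longrightarrow>
        (M s has_vector_derivative M s t ** ((\<chi> k l. G t k l) + B *\<^sub>R mat 1)) (at t within {s..T})"
  shows "markov_transition T G (\<lambda>s r i j. exp (- (B * (r - s))) * M s r $ i $ j)"
  unfolding markov_transition_def
proof (intro ballI conjI allI)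
  fix s i j assume s: "s \<in> {0..T}"
  show "exp (- (B * (s - s))) * M s s $ i $ j = (if i = j then 1 else 0)"
    using M1[OF s] by (simp add: mat_def)
  fix u assume u: "u \<in> {s..T}"
  have "((\<lambda>r. exp (- (B * (r - s)))) has_real_derivative - B * exp (- (B * (u - s))))
      (at u within {s..T})"
    by (auto intro!: derivative_eq_intros)
  from has_vector_derivative_scaleR[OF this M_deriv[OF s u]]
  have "((\<lambda>r. exp (- (B * (r - s))) *\<^sub>R M s r) has_vector_derivative
      exp (- (B * (u - s))) *\<^sub>R (M s u ** (\<chi> k l. G u k l))) (at u within {s..T})"
    by (simp add: matrix_add_ldistrib matrix_scalar_ac algebra_simps)
  from bounded_linear.has_vector_derivative[OF
      bounded_linear_compose[OF bounded_linear_vec_nth bounded_linear_vec_nth] this, of i j]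
  show "((\<lambda>r. exp (- (B * (r - s))) * M s r $ i $ j) has_real_derivative
      (\<Sum>k\<in>UNIV. exp (- (B * (u - s))) * M s u $ i $ k * G u k j)) (at u within {s..T})"
    by (simp add: matrix_matrix_mult_def sum_distrib_left mult.assoc
        has_real_derivative_iff_has_vector_derivative)
qed

lemma markov_transition_exists_nonneg:
  fixes G :: "real \<Rightarrow> 'n::finite \<Rightarrow> 'n \<Rightarrow> real"
  assumes cont: "\<And>k l. continuous_on {0..T} (\<lambda>u. G u k l)"
    and off_diag: "\<And>u k l. u \<in> {0..T} \<Longrightarrow> k \<noteq> l \<Longrightarrow> 0 \<le> G u k l"
  obtains P where "markov_transition T G P"
    "\<And>s r i j. 0 \<le> s \<Longrightarrow> s \<le> r \<Longrightarrow> r \<le> T \<Longrightarrow> 0 \<le> P s r i j"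
proof -
  define Gm where "Gm u = (\<chi> k l. G u k l)" for u
  have Gm_cont: "continuous_on {0..T} Gm"
    unfolding Gm_def by (intro continuous_intros cont)
  then have "bounded (Gm ` {0..T})"
    by (intro compact_imp_bounded compact_continuous_image compact_Icc)
  then obtain B where B: "0 < B" "\<And>u. u \<in> {0..T} \<Longrightarrow> norm (Gm u) \<le> B"
    unfolding bounded_pos by (meson imageI)
  define A where "A u = Gm u + B *\<^sub>R mat 1" for u
  have A_nonneg: "0 \<le> A u $ k $ l" if "u \<in> {0..T}" for u k l
    using off_diag[OF that, of k l] abs_matrix_entry_le_norm[of "Gm u" k l] B(2)[OF that]
    by (auto simp: A_def Gm_def mat_def)
  have "\<forall>s\<in>{0..T}. \<exists>M. M s = mat 1
      \<and> (\<forall>t\<in>{s..T}. (M has_vector_derivative M t ** A t) (at t within {s..T}))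
      \<and> (\<forall>t\<in>{s..T}. \<forall>i j. 0 \<le> M t $ i $ j)"
  proof
    fix s assume s: "s \<in> {0..T}"
    have cont_A: "continuous_on {s..T} A"
      unfolding A_def using s by (intro continuous_intros continuous_on_subset[OF Gm_cont]) auto
    obtain M where "M s = mat 1"
      "\<And>t. t \<in> {s..T} \<Longrightarrow> (M has_vector_derivative M t ** A t) (at t within {s..T})"
      "\<And>t i j. t \<in> {s..T} \<Longrightarrow> 0 \<le> M t $ i $ j"
      by (rule nonneg_matrix_ode_solution[of s T A]) (use s A_nonneg cont_A in auto)
    then show "\<exists>M. M s = mat 1
      \<and> (\<forall>t\<in>{s..T}. (M has_vector_derivative M t ** A t) (at t within {s..T}))
      \<and> (\<forall>t\<in>{s..T}. \<forall>i j. 0 \<le> M t $ i $ j)" by blast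
  qed
  then obtain M where M: "\<forall>s\<in>{0..T}. M s s = mat 1
      \<and> (\<forall>t\<in>{s..T}. (M s has_vector_derivative M s t ** A t) (at t within {s..T}))
      \<and> (\<forall>t\<in>{s..T}. \<forall>i j. 0 \<le> M s t $ i $ j)"
    by (auto dest!: bchoice)
  then have M1: "\<And>s. s \<in> {0..T} \<Longrightarrow> M s s = mat 1"
    and M_deriv: "\<And>s t. s \<in> {0..T} \<Longrightarrow> t \<in> {s..T} \<Longrightarrow>
        (M s has_vector_derivative M s t ** A t) (at t within {s..T})"
    and M_nonneg: "\<And>s t i j. s \<in> {0..T} \<Longrightarrow> t \<in> {s..T} \<Longrightarrow> 0 \<le> M s t $ i $ j"
    by auto
  have "markov_transition T G (\<lambda>s r i j. exp (- (B * (r - s))) * M s r $ i $ j)"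
    by (rule markov_transition_shifted_generator[OF M1 M_deriv[unfolded A_def Gm_def]])
  moreover have "0 \<le> exp (- (B * (r - s))) * M s r $ i $ j" if "0 \<le> s" "s \<le> r" "r \<le> T" for s r i j
    using M_nonneg[of s r i j] that by simp
  ultimately show ?thesis by (rule that)
qed

lemma has_real_derivative_zero_imp_eq:
  fixes f :: "real \<Rightarrow> real"
  assumes ab: "a \<le> b" and zero: "\<And>x. x \<in> {a..b} \<Longrightarrow> (f has_real_derivative 0) (at x within {a..b})"
  shows "f b = f a"
proof -
  obtain c where "\<forall>x\<in>{a..b}. f x = c"
    using has_field_derivative_zero_constant[OF convex_closed_interval(1) zero] by blast
  then show ?thesis using ab by simp
qed

lemma markov_transition_row_sum:
  fixes G :: "real \<Rightarrow> 'n::finite \<Rightarrow> 'n \<Rightarrow> real"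
  assumes mk: "markov_transition T G P"
    and rows: "\<And>u k. u \<in> {0..T} \<Longrightarrow> (\<Sum>l\<in>UNIV. G u k l) = 0"
    and s: "s \<in> {0..T}" and r: "r \<in> {s..T}"
  shows "(\<Sum>j\<in>UNIV. P s r i j) = 1"
proof -
  have P_deriv: "((\<lambda>r. P s r i j) has_real_derivative (\<Sum>k\<in>UNIV. P s u i k * G u k j))
      (at u within {s..T})" if "u \<in> {s..T}" for u j
    using mk s that unfolding markov_transition_def by blast
  have "((\<lambda>r. \<Sum>j\<in>UNIV. P s r i j) has_real_derivative 0) (at u within {s..r})"
    if u: "u \<in> {s..r}" for u
  proof -
    have "((\<lambda>r. \<Sum>j\<in>UNIV. P s r i j) has_real_derivative
        (\<Sum>j\<in>UNIV. \<Sum>k\<in>UNIV. P s u i k * G u k j)) (at u within {s..r})"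
      using u r by (intro DERIV_sum DERIV_subset[OF P_deriv]) auto
    moreover have "(\<Sum>j\<in>UNIV. \<Sum>k\<in>UNIV. P s u i k * G u k j) = (\<Sum>k\<in>UNIV. P s u i k * (\<Sum>j\<in>UNIV. G u k j))"
      by (subst sum.swap) (simp add: sum_distrib_left)
    ultimately show ?thesis using rows[of u] s u r by simp
  qed
  then have "(\<Sum>j\<in>UNIV. P s r i j) = (\<Sum>j\<in>UNIV. P s s i j)"
    using r by (intro has_real_derivative_zero_imp_eq[where f="\<lambda>r. \<Sum>j\<in>UNIV. P s r i j"]) auto
  also have "\<dots> = 1"
    using mk s unfolding markov_transition_def by simp
  finally show ?thesis .
qed

text \<open>By the forward equation, \<open>r \<mapsto> \<Sum>\<^sub>j P a r i j * V j r\<close> has zero derivative.\<close>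
lemma markov_transition_backward_duality:
  fixes G :: "real \<Rightarrow> 'n::finite \<Rightarrow> 'n \<Rightarrow> real"
  assumes mk: "markov_transition T G P" and ab: "0 \<le> a" "a \<le> b" "b \<le> T"
    and V: "\<And>j r. r \<in> {a..b} \<Longrightarrow>
        (V j has_real_derivative - (\<Sum>l\<in>UNIV. G r j l * V l r)) (at r within {a..b})"
  shows "V i a = (\<Sum>j\<in>UNIV. P a b i j * V j b)"
proof -
  have "((\<lambda>r. \<Sum>j\<in>UNIV. P a r i j * V j r) has_real_derivative 0) (at r within {a..b})"
    if r: "r \<in> {a..b}" for r
  proof -
    have P_deriv: "((\<lambda>r. P a r i j) has_real_derivative (\<Sum>k\<in>UNIV. P a r i k * G r k j)) (at r within {a..T})" for j
      using mk ab r unfolding markov_transition_def by auto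
    have P: "((\<lambda>r. P a r i j) has_real_derivative (\<Sum>k\<in>UNIV. P a r i k * G r k j)) (at r within {a..b})" for j
      using ab by (intro DERIV_subset[OF P_deriv]) auto
    have "((\<lambda>r. \<Sum>j\<in>UNIV. P a r i j * V j r) has_real_derivative
        (\<Sum>j\<in>UNIV. P a r i j * - (\<Sum>l\<in>UNIV. G r j l * V l r) + (\<Sum>k\<in>UNIV. P a r i k * G r k j) * V j r))
        (at r within {a..b})"
      by (intro DERIV_sum DERIV_mult' P V r)
    moreover have "(\<Sum>j\<in>UNIV. (\<Sum>k\<in>UNIV. P a r i k * G r k j) * V j r)
        = (\<Sum>j\<in>UNIV. P a r i j * (\<Sum>l\<in>UNIV. G r j l * V l r))"
      unfolding sum_distrib_left sum_distrib_right mult.assoc by (rule sum.swap)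
    ultimately show ?thesis by (simp add: sum_subtractf)
  qed
  then have "(\<Sum>j\<in>UNIV. P a b i j * V j b) = (\<Sum>j\<in>UNIV. P a a i j * V j a)"
    using ab by (intro has_real_derivative_zero_imp_eq[where f="\<lambda>r. \<Sum>j\<in>UNIV. P a r i j * V j r"]) auto
  also have "\<dots> = V i a"
  proof -
    have "P a a i j = (if i = j then 1 else 0)" for j
      using mk ab unfolding markov_transition_def by auto
    then have "(\<Sum>j\<in>UNIV. P a a i j * V j a) = (\<Sum>j\<in>UNIV. if i = j then V j a else 0)"
      by (intro sum.cong) auto
    then show ?thesis by simp
  qed
  finally show ?thesis by simp
qed

section \<open>The alignment system\<close>

lemma norm_snd_nth_le: "norm (snd (z $ j)) \<le> norm (z :: ('a::real_normed_vector \<times> 'b::real_normed_vector)^'n)"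
  using norm_snd_le[of "snd (z $ j)" "fst (z $ j)"] Finite_Cartesian_Product.norm_nth_le[of z j]
  by simp

lemma Qmat_row_sum: "(\<Sum>j\<in>UNIV. Qmat Psi z i j) = 0"
proof -
  have "(\<Sum>j\<in>UNIV - {i}. Qmat Psi z i j) = (\<Sum>j\<in>UNIV - {i}. Psi i j z)"
    by (rule sum.cong) (auto simp: Qmat_def)
  then show ?thesis by (simp add: sum.remove[of UNIV i] Qmat_def)
qed

lemma rhs_velocity_component:
  "snd (rhs \<alpha> Psi z $ j) $ m = (\<Sum>l\<in>UNIV. \<alpha> * Qmat Psi z j l * snd (z $ l) $ m)"
proof -
  have "(\<Sum>l\<in>UNIV. Qmat Psi z j l * snd (z $ j) $ m) = 0"
    by (simp add: sum_distrib_right[symmetric] Qmat_row_sum)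
  then show ?thesis
    by (simp add: rhs_def right_diff_distrib sum_subtractf sum_distrib_left mult.assoc)
qed

lemma Vdiam_upper: "norm (snd (z $ j) - snd (z $ l)) \<le> Vdiam z"
  unfolding Vdiam_def
  by (rule cSUP_upper2[where x=j, OF _ _ cSUP_upper[where x=l]]) (auto intro: bdd_above_finite)

lemma Vdiam_stochastic_le:
  fixes z w :: "('d::finite,'n::finite) config" and P :: "'n \<Rightarrow> 'n \<Rightarrow> real"
  assumes nonneg: "\<And>i j. 0 \<le> P i j" and rows: "\<And>i. (\<Sum>j\<in>UNIV. P i j) = 1"
    and w: "\<And>i. snd (w $ i) = (\<Sum>j\<in>UNIV. P i j *\<^sub>R snd (z $ j))"
  shows "Vdiam w \<le> Vdiam z"
proof -
  define v where "v j = snd (z $ j)" for j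
  have "norm (snd (w $ i) - snd (w $ k)) \<le> Vdiam z" for i k
  proof -
    txt \<open>Write the difference as an average of the differences \<open>v j - v l\<close> over the
      product of the rows \<open>i\<close> and \<open>k\<close>.\<close>
    have "snd (w $ i) - snd (w $ k) = (\<Sum>j\<in>UNIV. \<Sum>l\<in>UNIV. (P i j * P k l) *\<^sub>R (v j - v l))"
      by (simp add: w v_def scaleR_diff_right sum_subtractf scaleR_sum_left[symmetric]
          sum_distrib_left[symmetric] sum_distrib_right[symmetric] rows sum.swap[of _ UNIV UNIV])
    also have "norm \<dots> \<le> (\<Sum>j\<in>UNIV. \<Sum>l\<in>UNIV. (P i j * P k l) * Vdiam z)"
      using nonneg Vdiam_upper[of z] unfolding v_def
      by (intro order_trans[OF norm_sum sum_mono] order_trans[OF norm_sum sum_mono])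
        (simp add: abs_mult mult_left_mono)
    also have "\<dots> = Vdiam z"
      by (simp add: sum_distrib_right[symmetric] sum_distrib_left[symmetric] rows mult.assoc)
    finally show ?thesis .
  qed
  then show ?thesis unfolding Vdiam_def[of w] by (intro cSUP_least) auto
qed

locale alignment_system =
  fixes \<alpha> :: real and Psi :: "'n::finite \<Rightarrow> 'n \<Rightarrow> ('d::finite,'n) config \<Rightarrow> real"
  assumes alpha_pos: "\<alpha> > 0"
    and Psi_nonneg: "\<And>i j z. i \<noteq> j \<Longrightarrow> Psi i j z \<ge> 0"
    and Psi_bounded: "\<And>i j. i \<noteq> j \<Longrightarrow> bounded (range (Psi i j))"
    and Psi_locally_lipschitz: "\<And>i j z. i \<noteq> j \<Longrightarrow> \<exists>r>0. \<exists>L. L-lipschitz_on (cball z r) (Psi i j)"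
begin

lemma Qmat_bounded:
  obtains B where "0 \<le> B" "\<And>z i j. \<bar>Qmat Psi z i j\<bar> \<le> B"
proof -
  have "bounded (\<Union>p\<in>{p. fst p \<noteq> snd p}. range (Psi (fst p) (snd p)))"
    by (intro bounded_UN) (auto intro: Psi_bounded)
  then obtain c where c: "\<And>i j z. i \<noteq> j \<Longrightarrow> \<bar>Psi i j z\<bar> \<le> c"
    unfolding bounded_iff by fastforce
  define B where "B = real CARD('n) * max c 0"
  have "\<bar>Qmat Psi z i j\<bar> \<le> B" for z i j
  proof (cases "i = j")
    case True
    have "\<bar>Qmat Psi z i j\<bar> \<le> (\<Sum>k\<in>UNIV - {i}. \<bar>Psi i k z\<bar>)"
      using True by (simp add: Qmat_def sum_abs)
    also have "\<dots> \<le> (\<Sum>k\<in>UNIV - {i}. max c 0)"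
      by (intro sum_mono max.coboundedI1 c) auto
    also have "\<dots> \<le> (\<Sum>k\<in>(UNIV::'n set). max c 0)"
      by (intro sum_mono2) auto
    finally show ?thesis by (simp add: B_def)
  next
    case False
    have "1 * max c 0 \<le> real CARD('n) * max c 0" by (intro mult_right_mono) auto
    then show ?thesis using c[OF False, of z] False by (simp add: Qmat_def B_def)
  qed
  then show ?thesis using that[of B] by (simp add: B_def)
qed

lemma Qmat_lipschitz_on_compact:
  assumes "compact K"
  shows "\<exists>L. L-lipschitz_on K (\<lambda>z. Qmat Psi z i j)"
proof (cases "i = j")
  case True
  have "\<exists>L. L-lipschitz_on K (\<lambda>z. \<Sum>k\<in>UNIV - {i}. Psi i k z)"
    using Psi_locally_lipschitz assms
    by (intro lipschitz_on_sum_exists lipschitz_on_compact_if_locally_lipschitz) auto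
  then show ?thesis using True by (auto simp: Qmat_def dest: lipschitz_on_minus)
next
  case False
  then show ?thesis
    using lipschitz_on_compact_if_locally_lipschitz[OF Psi_locally_lipschitz[OF False] assms]
    by (simp add: Qmat_def)
qed

lemma Qmat_continuous: "continuous_on UNIV (\<lambda>z. Qmat Psi z i j)"
proof (intro continuous_at_imp_continuous_on ballI)
  fix z :: "('d,'n) config"
  obtain L where "L-lipschitz_on (cball z 1) (\<lambda>z. Qmat Psi z i j)"
    using Qmat_lipschitz_on_compact[OF compact_cball] by blast
  then show "isCont (\<lambda>z. Qmat Psi z i j) z"
    by (intro continuous_on_interior[of "cball z 1"] lipschitz_on_continuous_on) auto
qed

lemma rhs_linear_growth:
  obtains K where "\<And>z. norm (rhs \<alpha> Psi z) \<le> K * norm z"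
proof -
  obtain B where B: "0 \<le> B" "\<And>z i j. \<bar>Qmat Psi z i j\<bar> \<le> B" by (rule Qmat_bounded) blast
  define K1 where "K1 = 1 + \<bar>\<alpha>\<bar> * real CARD('n) * (B * 2)"
  have component: "norm (rhs \<alpha> Psi z $ i) \<le> K1 * norm z" for z i
  proof -
    have "norm (Qmat Psi z i j *\<^sub>R (snd (z $ j) - snd (z $ i))) \<le> B * (2 * norm z)" for j
    proof -
      have "norm (snd (z $ j) - snd (z $ i)) \<le> 2 * norm z"
        using norm_triangle_ineq4[of "snd (z $ j)" "snd (z $ i)"] norm_snd_nth_le[of z j]
          norm_snd_nth_le[of z i] by linarith
      then show ?thesis using B by (auto intro!: mult_mono)
    qed
    then have sum_bound: "norm (\<Sum>j\<in>UNIV. Qmat Psi z i j *\<^sub>R (snd (z $ j) - snd (z $ i)))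
        \<le> (\<Sum>j\<in>(UNIV::'n set). B * (2 * norm z))"
      by (intro order_trans[OF norm_sum sum_mono])
    have "norm (rhs \<alpha> Psi z $ i) \<le> norm (snd (z $ i))
        + norm (\<alpha> *\<^sub>R (\<Sum>j\<in>UNIV. Qmat Psi z i j *\<^sub>R (snd (z $ j) - snd (z $ i))))"
      unfolding rhs_def vec_lambda_beta by (rule norm_Pair_le)
    also have "\<dots> \<le> norm z + \<bar>\<alpha>\<bar> * (\<Sum>j\<in>(UNIV::'n set). B * (2 * norm z))"
      using mult_left_mono[OF sum_bound abs_ge_zero[of \<alpha>]] by (intro add_mono norm_snd_nth_le) simp
    also have "\<dots> = K1 * norm z" by (simp add: K1_def algebra_simps)
    finally show ?thesis .
  qed
  have "norm (rhs \<alpha> Psi z) \<le> (\<Sum>i\<in>(UNIV::'n set). K1 * norm z)" for z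
    using norm_le_sum_norm_nth sum_mono[OF component] by (rule order_trans)
  then show ?thesis using that[of "real CARD('n) * K1"] by (simp add: mult.assoc)
qed

lemma rhs_lipschitz_on_cball: "\<exists>L. L-lipschitz_on (cball 0 R) (rhs \<alpha> Psi)"
proof -
  obtain B where B: "0 \<le> B" "\<And>z i j. \<bar>Qmat Psi z i j\<bar> \<le> B" by (rule Qmat_bounded) blast
  have velocity_linear: "bounded_linear (\<lambda>z :: ('d,'n) config. snd (z $ j))" for j
    by (intro bounded_linear_compose[OF bounded_linear_snd bounded_linear_vec_nth])
  have interaction: "\<exists>C. C-lipschitz_on (cball 0 R) (\<lambda>z. Qmat Psi z i j *\<^sub>R (snd (z $ j) - snd (z $ i)))"
    for i j
  proof -
    obtain C where C: "C-lipschitz_on (cball 0 R) (\<lambda>z. Qmat Psi z i j)"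
      using Qmat_lipschitz_on_compact[OF compact_cball] by blast
    obtain D where D: "D-lipschitz_on (cball 0 R) (\<lambda>z :: ('d,'n) config. snd (z $ j) - snd (z $ i))"
      by (rule bounded_linear.lipschitz_boundE[OF bounded_linear_sub[OF velocity_linear velocity_linear]])
    have "norm (snd (z $ j) - snd (z $ i)) \<le> 2 * \<bar>R\<bar>" if "z \<in> cball 0 R" for z :: "('d,'n) config"
      using that norm_triangle_ineq4[of "snd (z $ j)" "snd (z $ i)"]
        norm_snd_nth_le[of z j] norm_snd_nth_le[of z i] by simp
    from lipschitz_on_scaleR_bounded[OF C D B(2) this B(1)] show ?thesis by (intro exI) simp
  qed
  have "\<exists>C. C-lipschitz_on (cball 0 R) (\<lambda>z. rhs \<alpha> Psi z $ i)" for i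
  proof -
    obtain C where C: "C-lipschitz_on (cball 0 R) (\<lambda>z :: ('d,'n) config. snd (z $ i))"
      by (rule bounded_linear.lipschitz_boundE[OF velocity_linear])
    have "\<exists>D. D-lipschitz_on (cball 0 R)
        (\<lambda>z. \<Sum>j\<in>UNIV. Qmat Psi z i j *\<^sub>R (snd (z $ j) - snd (z $ i)))"
      by (rule lipschitz_on_sum_exists) (simp_all add: interaction)
    then obtain D where "D-lipschitz_on (cball 0 R)
        (\<lambda>z. \<Sum>j\<in>UNIV. Qmat Psi z i j *\<^sub>R (snd (z $ j) - snd (z $ i)))" ..
    from lipschitz_on_Pair[OF C lipschitz_on_cmult[OF this, of \<alpha>]]
    have "(sqrt (C\<^sup>2 + (\<bar>\<alpha>\<bar> * D)\<^sup>2))-lipschitz_on (cball 0 R) (\<lambda>z. rhs \<alpha> Psi z $ i)"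
      unfolding rhs_def vec_lambda_beta .
    then show ?thesis ..
  qed
  then show ?thesis by (rule lipschitz_on_vec_exists)
qed

lemma solution_exists_unique:
  obtains z where "is_solution \<alpha> Psi z0 z"
    "\<And>w t. is_solution \<alpha> Psi z0 w \<Longrightarrow> 0 \<le> t \<Longrightarrow> w t = z t"
proof -
  obtain K where K: "\<And>z. norm (rhs \<alpha> Psi z) \<le> K * norm z" by (rule rhs_linear_growth) blast
  obtain z where z: "z 0 = z0" "\<And>t. 0 \<le> t \<Longrightarrow> (z has_vector_derivative rhs \<alpha> Psi (z t)) (at t within {0..})"
    by (rule ode_global_solution_exists[OF K rhs_lipschitz_on_cball, of z0]) blast
  show ?thesis
  proof (rule that)
    show "is_solution \<alpha> Psi z0 z" unfolding is_solution_def using z by auto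
    fix w and t :: real assume w: "is_solution \<alpha> Psi z0 w" and t: "0 \<le> t"
    show "w t = z t"
    proof (rule ode_global_solution_unique[where z=w and w=z, OF rhs_lipschitz_on_cball])
      show "(w has_vector_derivative rhs \<alpha> Psi (w s)) (at s within {0..})" if "0 \<le> s" for s
        using w that by (simp add: is_solution_def)
    qed (use w z t in \<open>simp_all add: is_solution_def\<close>)
  qed
qed

text \<open>The generator \<open>\<alpha> Q\<^bsub>T - u\<^esub>\<close>, \<open>u \<in> [0, T]\<close>, of the time-reversed process \<open>Y\<^sup>T\<close> of the paper.\<close>
abbreviation time_reversed_generator
  :: "(real \<Rightarrow> ('d,'n) config) \<Rightarrow> real \<Rightarrow> real \<Rightarrow> 'n \<Rightarrow> 'n \<Rightarrow> real" where
  "time_reversed_generator z T \<equiv> \<lambda>u k l. \<alpha> * Qmat Psi (z (T - u)) k l"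

lemma transition_exists_nonneg:
  assumes sol: "is_solution \<alpha> Psi z0 z"
  obtains P where "markov_transition T (time_reversed_generator z T) P"
    "\<And>s r i j. 0 \<le> s \<Longrightarrow> s \<le> r \<Longrightarrow> r \<le> T \<Longrightarrow> 0 \<le> P s r i j"
proof -
  have "continuous_on {0..} z"
    using sol has_vector_derivative_continuous continuous_on_eq_continuous_within
    unfolding is_solution_def by (metis atLeast_iff)
  then have "continuous_on {0..T} (\<lambda>u. z (T - u))"
    by (rule continuous_on_compose2) (auto intro!: continuous_intros)
  then have cont: "continuous_on {0..T} (\<lambda>u. \<alpha> * Qmat Psi (z (T - u)) k l)" for k l
    by (intro continuous_intros continuous_on_compose2[OF Qmat_continuous]) auto
  have off_diag: "0 \<le> \<alpha> * Qmat Psi (z (T - u)) k l" if "u \<in> {0..T}" "k \<noteq> l" for u k l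
    using alpha_pos Psi_nonneg[OF that(2)] that by (simp add: Qmat_def)
  show ?thesis
    by (rule markov_transition_exists_nonneg[where G="time_reversed_generator z T", OF cont off_diag])
      (blast intro: that)+
qed

text \<open>The reversed-time velocities \<open>r \<mapsto> v(T - r)\<close> solve the backward Kolmogorov equation.\<close>
lemma velocity_transition_repr:
  assumes sol: "is_solution \<alpha> Psi z0 z"
    and mk: "markov_transition T (time_reversed_generator z T) P"
    and ab: "0 \<le> a" "a \<le> b" "b \<le> T"
  shows "snd (z (T - a) $ i) = (\<Sum>j\<in>UNIV. P a b i j *\<^sub>R snd (z (T - b) $ j))"
proof -
  have "snd (z (T - a) $ i) $ m = (\<Sum>j\<in>UNIV. P a b i j * snd (z (T - b) $ j) $ m)" for m
  proof (rule markov_transition_backward_duality[OF mk ab, where V="\<lambda>j r. snd (z (T - r) $ j) $ m"])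
    fix j r assume r: "r \<in> {a..b}"
    have "((\<lambda>r. T - r) has_real_derivative -1) (at r within {a..b})"
      by (auto intro!: derivative_eq_intros)
    then have minus: "((\<lambda>r. T - r) has_vector_derivative -1) (at r within {a..b})"
      by (simp add: has_real_derivative_iff_has_vector_derivative)
    have "(z has_vector_derivative rhs \<alpha> Psi (z (T - r))) (at (T - r) within {0..})"
      using sol r ab by (simp add: is_solution_def)
    then have "(z has_vector_derivative rhs \<alpha> Psi (z (T - r))) (at (T - r) within (\<lambda>r. T - r) ` {a..b})"
      by (rule has_vector_derivative_within_subset) (use ab in auto)
    from vector_diff_chain_within[OF minus this]
    have "((\<lambda>r. z (T - r)) has_vector_derivative - rhs \<alpha> Psi (z (T - r))) (at r within {a..b})"
      by (simp add: o_def)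
    moreover have "bounded_linear (\<lambda>x :: ('d,'n) config. snd (x $ j) $ m)"
      by (intro bounded_linear_compose[OF bounded_linear_vec_nth]
          bounded_linear_compose[OF bounded_linear_snd bounded_linear_vec_nth])
    ultimately have "((\<lambda>r. snd (z (T - r) $ j) $ m) has_vector_derivative
        snd ((- rhs \<alpha> Psi (z (T - r))) $ j) $ m) (at r within {a..b})"
      using bounded_linear.has_vector_derivative by blast
    then show "((\<lambda>r. snd (z (T - r) $ j) $ m) has_real_derivative
        - (\<Sum>l\<in>UNIV. \<alpha> * Qmat Psi (z (T - r)) j l * snd (z (T - r) $ l) $ m)) (at r within {a..b})"
      by (simp add: has_real_derivative_iff_has_vector_derivative rhs_velocity_component)
  qed
  then show ?thesis by (simp add: vec_eq_iff)
qed

lemma Vdiam_antimono: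
  assumes sol: "is_solution \<alpha> Psi z0 z" and st: "0 \<le> s" "s \<le> t"
  shows "Vdiam (z t) \<le> Vdiam (z s)"
proof -
  obtain P where mk: "markov_transition t (time_reversed_generator z t) P"
    and nonneg: "\<And>s r i j. 0 \<le> s \<Longrightarrow> s \<le> r \<Longrightarrow> r \<le> t \<Longrightarrow> 0 \<le> P s r i j"
    by (rule transition_exists_nonneg[OF sol]) blast
  show ?thesis
  proof (rule Vdiam_stochastic_le)
    show "0 \<le> P 0 (t - s) i j" for i j using nonneg st by simp
    show "(\<Sum>j\<in>UNIV. P 0 (t - s) i j) = 1" for i
      using st by (intro markov_transition_row_sum[OF mk])
        (auto simp: sum_distrib_left[symmetric] Qmat_row_sum)
    show "snd (z t $ i) = (\<Sum>j\<in>UNIV. P 0 (t - s) i j *\<^sub>R snd (z s $ j))" for i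
      using velocity_transition_repr[OF sol mk, of 0 "t - s" i] st by simp
  qed
qed

end

theorem theorem2p6:
  fixes \<alpha> :: real
    and Psi :: "'n::finite \<Rightarrow> 'n \<Rightarrow> ('d::finite,'n) config \<Rightarrow> real"
    and z0 :: "('d,'n) config"
  assumes alpha_pos: "\<alpha> > 0"
    and nonneg: "\<And>i j z. i \<noteq> j \<Longrightarrow> Psi i j z \<ge> 0"
    and bdd: "\<And>i j. i \<noteq> j \<Longrightarrow> bounded (range (Psi i j))"
    and loclip: "\<And>i j z. i \<noteq> j \<Longrightarrow>
        \<exists>r>0. \<exists>L. L-lipschitz_on (cball z r) (Psi i j)"
  shows "\<exists>z. is_solution \<alpha> Psi z0 z
     \<and> (\<forall>w. is_solution \<alpha> Psi z0 w \<longrightarrow> (\<forall>t\<ge>0. w t = z t))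
     \<and> (\<forall>T>0.
          (\<exists>P. markov_transition T (\<lambda>u k l. \<alpha> * Qmat Psi (z (T - u)) k l) P)
        \<and> (\<forall>P. markov_transition T (\<lambda>u k l. \<alpha> * Qmat Psi (z (T - u)) k l) P \<longrightarrow>
             (\<forall>m t i. t \<in> {0..T} \<longrightarrow>
                snd (z t $ i) $ m = (\<Sum>j\<in>UNIV. P (T - t) T i j * (snd (z 0 $ j) $ m)))))
     \<and> (\<forall>s t. 0 \<le> s \<and> s \<le> t \<longrightarrow> Vdiam (z t) \<le> Vdiam (z s))"
proof -
  interpret alignment_system \<alpha> Psi
    using alpha_pos nonneg bdd loclip by unfold_locales auto
  obtain z where sol: "is_solution \<alpha> Psi z0 z"
    and unique: "\<And>w t. is_solution \<alpha> Psi z0 w \<Longrightarrow> 0 \<le> t \<Longrightarrow> w t = z t"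
    by (rule solution_exists_unique) blast
  have transition: "\<exists>P. markov_transition T (time_reversed_generator z T) P" for T
    by (rule transition_exists_nonneg[OF sol]) blast
  have repr: "snd (z t $ i) $ m = (\<Sum>j\<in>UNIV. P (T - t) T i j * (snd (z 0 $ j) $ m))"
    if "markov_transition T (time_reversed_generator z T) P" "t \<in> {0..T}" for T P t i m
    using arg_cong[OF velocity_transition_repr[OF sol that(1), of "T - t" T i], of "\<lambda>v. v $ m"] that(2)
    by simp
  show ?thesis
    using sol unique transition repr Vdiam_antimono[OF sol] by blast
qed

end
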